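(* Suppose that $I$ is an ideal over an uncountable cardinal $\kappa$ such that $\mathcal{P}(\kappa)/I$ is complete. For any cardinal $\lambda$, if $I$ is not $\lambda$-saturated, then $2^\lambda\leq 2^\kappa$. In particular: (a) $I$ is $2^\kappa$-saturated; (b) if $2^\kappa<2^{\kappa^+}$, then $I$ is $\kappa^+$-saturated.
   Context: An ideal over $\kappa$ means a proper, $\kappa$-complete ideal on $\mathcal{P}(\kappa)$ containing all singletons. $\mathcal{P}(\kappa)/I$ is the quotient Boolean algebra of classes $[A]_I=\{B: A\triangle B\in I\}$. $I$ is $\lambda$-saturated if whenever $\{X_\alpha:\alpha<\lambda\}\subseteq\mathcal{P}(\kappa)\setminus I$ there are $\alpha<\beta<\lambda$ with $X_\alpha\cap X_\beta\notin I$. *)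

theory Defs
  imports Main "HOL-Library.Countable_Set"
begin

text \<open>The cardinal kappa is represented by a set K (its cardinality is card_of K).
  An ideal over kappa: proper, kappa-complete ideal on Pow K containing all singletons.\<close>

definition ideal_over :: "'a set set \<Rightarrow> 'a set \<Rightarrow> bool" where
  "ideal_over I K \<longleftrightarrow>
     I \<subseteq> Pow K \<and>
     K \<notin> I \<and>
     (\<forall>A\<in>I. \<forall>B. B \<subseteq> A \<longrightarrow> B \<in> I) \<and>
     (\<forall>F. F \<subseteq> I \<and> (card_of F, card_of K) \<in> ordLess \<longrightarrow> \<Union>F \<in> I) \<and>
     (\<forall>x\<in>K. {x} \<in> I)"

text \<open>Order of the quotient algebra P(K)/I on representatives: [A] \<le> [B] iff A - B \<in> I.\<close>
definition quot_le :: "'a set set \<Rightarrow> 'a set \<Rightarrow> 'a set \<Rightarrow> bool" where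
  "quot_le I A B \<longleftrightarrow> A - B \<in> I"

definition quotient_complete :: "'a set set \<Rightarrow> 'a set \<Rightarrow> bool" where
  "quotient_complete I K \<longleftrightarrow>
     (\<forall>\<A> \<subseteq> Pow K. \<exists>S \<subseteq> K.
        (\<forall>A\<in>\<A>. quot_le I A S) \<and>
        (\<forall>T \<subseteq> K. (\<forall>A\<in>\<A>. quot_le I A T) \<longrightarrow> quot_le I S T))"

text \<open>I is lambda-saturated, lambda represented by an index set L: every L-indexed family of
  I-positive sets contains two distinct members with I-positive intersection.\<close>
definition saturated :: "'a set set \<Rightarrow> 'a set \<Rightarrow> 'b set \<Rightarrow> bool" where
  "saturated I K L \<longleftrightarrow>
     (\<forall>X. (\<forall>\<alpha>\<in>L. X \<alpha> \<subseteq> K \<and> X \<alpha> \<notin> I) \<longrightarrow>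
          (\<exists>\<alpha>\<in>L. \<exists>\<beta>\<in>L. \<alpha> \<noteq> \<beta> \<and> X \<alpha> \<inter> X \<beta> \<notin> I))"

end

theory Submission
  imports Defs
begin

text \<open>Let \<open>X\<close> witness that \<open>I\<close> is not \<open>\<lambda>\<close>-saturated, i.e. \<open>X\<close> is an antichain of \<open>I\<close>-positive
  sets indexed by \<open>\<lambda>\<close>. Send \<open>S \<subseteq> \<lambda>\<close> to the supremum of \<open>{[X \<alpha>] : \<alpha> \<in> S}\<close> in the complete
  algebra \<open>P(\<kappa>)/I\<close>. If \<open>\<alpha> \<notin> S\<close> this supremum is disjoint from \<open>[X \<alpha>]\<close>, while for \<open>\<alpha> \<in> S\<close> it
  lies above the nonzero \<open>[X \<alpha>]\<close>; so the map is injective and \<open>2\<^sup>\<lambda> \<le> 2\<^sup>\<kappa>\<close>. Cantor's theorem then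
  gives the two corollaries.\<close>

lemma ideal_over_subset: "ideal_over I K \<Longrightarrow> A \<in> I \<Longrightarrow> B \<subseteq> A \<Longrightarrow> B \<in> I"
  unfolding ideal_over_def by blast

lemma ideal_over_Union:
  "ideal_over I K \<Longrightarrow> F \<subseteq> I \<Longrightarrow> (card_of F, card_of K) \<in> ordLess \<Longrightarrow> \<Union>F \<in> I"
  by (simp add: ideal_over_def)

lemma ideal_over_Un:
  assumes "ideal_over I K" "infinite K" "A \<in> I" "B \<in> I"
  shows "A \<union> B \<in> I"
proof -
  have "(card_of {A, B}, card_of K) \<in> ordLess"
    using \<open>infinite K\<close>
    by (intro finite_ordLess_infinite[OF card_of_Well_order card_of_Well_order])
      (simp_all add: Field_card_of)
  then have "\<Union>{A, B} \<in> I"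
    using assms by (intro ideal_over_Union) auto
  then show ?thesis by simp
qed

definition quot_lub :: "'a set set \<Rightarrow> 'a set \<Rightarrow> 'a set set \<Rightarrow> 'a set \<Rightarrow> bool" where
  "quot_lub I K \<A> S \<longleftrightarrow>
     S \<subseteq> K \<and> (\<forall>A\<in>\<A>. quot_le I A S) \<and> (\<forall>T \<subseteq> K. (\<forall>A\<in>\<A>. quot_le I A T) \<longrightarrow> quot_le I S T)"

lemma quotient_complete_iff_quot_lub:
  "quotient_complete I K \<longleftrightarrow> (\<forall>\<A> \<subseteq> Pow K. \<exists>S. quot_lub I K \<A> S)"
  unfolding quotient_complete_def quot_lub_def by blast

text \<open>If \<open>[B]\<close> is disjoint from every member of \<open>\<A>\<close>, then \<open>S - B\<close> is still an upper bound of \<open>\<A>\<close>.\<close>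

lemma quot_lub_Int_in_ideal:
  assumes I: "ideal_over I K" "infinite K"
    and lub: "quot_lub I K \<A> S"
    and disj: "\<And>A. A \<in> \<A> \<Longrightarrow> A \<inter> B \<in> I"
  shows "S \<inter> B \<in> I"
proof -
  have upper: "A - S \<in> I" if "A \<in> \<A>" for A
    using lub that unfolding quot_lub_def quot_le_def by blast
  have least: "S - T \<in> I" if "T \<subseteq> K" "\<And>A. A \<in> \<A> \<Longrightarrow> A - T \<in> I" for T
    using lub that unfolding quot_lub_def quot_le_def by blast
  have "A - (S - B) \<in> I" if "A \<in> \<A>" for A
  proof -
    have "(A - S) \<union> (A \<inter> B) \<in> I"
      using ideal_over_Un[OF I upper[OF that] disj[OF that]] .
    then show ?thesis
      by (rule ideal_over_subset[OF I(1)]) blast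
  qed
  moreover have "S - B \<subseteq> K"
    using lub unfolding quot_lub_def by blast
  ultimately have "S - (S - B) \<in> I"
    using least by blast
  then show ?thesis
    by (simp add: Diff_Diff_Int)
qed

definition ideal_antichain :: "'a set set \<Rightarrow> 'a set \<Rightarrow> 'b set \<Rightarrow> ('b \<Rightarrow> 'a set) \<Rightarrow> bool" where
  "ideal_antichain I K L X \<longleftrightarrow>
     (\<forall>\<alpha>\<in>L. X \<alpha> \<subseteq> K \<and> X \<alpha> \<notin> I) \<and> (\<forall>\<alpha>\<in>L. \<forall>\<beta>\<in>L. \<alpha> \<noteq> \<beta> \<longrightarrow> X \<alpha> \<inter> X \<beta> \<in> I)"

lemma not_saturated_iff_ideal_antichain:
  "\<not> saturated I K L \<longleftrightarrow> (\<exists>X. ideal_antichain I K L X)"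
  unfolding saturated_def ideal_antichain_def by blast

lemma ideal_antichain_quot_lub_inj:
  assumes I: "ideal_over I K" "infinite K"
    and X: "ideal_antichain I K L X"
    and lub: "\<And>S. S \<subseteq> L \<Longrightarrow> quot_lub I K (X ` S) (\<sigma> S)"
  shows "inj_on \<sigma> (Pow L)"
proof -
  have neq: "\<sigma> S \<noteq> \<sigma> S'" if "S \<subseteq> L" "S' \<subseteq> L" "\<alpha> \<in> S" "\<alpha> \<notin> S'" for S S' \<alpha>
  proof
    assume eq: "\<sigma> S = \<sigma> S'"
    have "X \<alpha> - \<sigma> S \<in> I"
      using lub[OF \<open>S \<subseteq> L\<close>] \<open>\<alpha> \<in> S\<close> unfolding quot_lub_def quot_le_def by blast
    moreover have "A \<inter> X \<alpha> \<in> I" if "A \<in> X ` S'" for A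
    proof -
      obtain \<beta> where "\<beta> \<in> S'" "A = X \<beta>"
        using \<open>A \<in> X ` S'\<close> by blast
      moreover have "\<beta> \<noteq> \<alpha>" "\<beta> \<in> L" "\<alpha> \<in> L"
        using \<open>\<beta> \<in> S'\<close> \<open>S' \<subseteq> L\<close> \<open>S \<subseteq> L\<close> \<open>\<alpha> \<in> S\<close> \<open>\<alpha> \<notin> S'\<close> by auto
      ultimately show ?thesis
        using X unfolding ideal_antichain_def by simp
    qed
    then have "\<sigma> S' \<inter> X \<alpha> \<in> I"
      by (rule quot_lub_Int_in_ideal[OF I lub[OF \<open>S' \<subseteq> L\<close>]])
    ultimately have "(X \<alpha> - \<sigma> S) \<union> (\<sigma> S' \<inter> X \<alpha>) \<in> I"
      by (rule ideal_over_Un[OF I])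
    moreover have "X \<alpha> \<subseteq> (X \<alpha> - \<sigma> S) \<union> (\<sigma> S' \<inter> X \<alpha>)"
      unfolding eq by blast
    ultimately have "X \<alpha> \<in> I"
      by (rule ideal_over_subset[OF I(1)])
    moreover have "X \<alpha> \<notin> I"
      using X \<open>S \<subseteq> L\<close> \<open>\<alpha> \<in> S\<close> unfolding ideal_antichain_def by blast
    ultimately show False
      by contradiction
  qed
  show ?thesis
  proof (rule inj_onI, rule ccontr)
    fix S S' assume "S \<in> Pow L" "S' \<in> Pow L" "\<sigma> S = \<sigma> S'" "S \<noteq> S'"
    then consider \<alpha> where "\<alpha> \<in> S" "\<alpha> \<notin> S'" | \<alpha> where "\<alpha> \<in> S'" "\<alpha> \<notin> S"
      by blast
    then show False
      using neq \<open>S \<in> Pow L\<close> \<open>S' \<in> Pow L\<close> \<open>\<sigma> S = \<sigma> S'\<close> by cases (metis PowD)+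
  qed
qed

lemma not_saturated_card_of_Pow_ordLeq:
  fixes I :: "'a set set" and K :: "'a set" and L :: "'b set"
  assumes I: "ideal_over I K" "infinite K"
    and complete: "quotient_complete I K"
    and "\<not> saturated I K L"
  shows "(card_of (Pow L), card_of (Pow K)) \<in> ordLeq"
proof -
  obtain X where X: "ideal_antichain I K L X"
    using \<open>\<not> saturated I K L\<close> not_saturated_iff_ideal_antichain by blast
  define \<sigma> where "\<sigma> S = (SOME T. quot_lub I K (X ` S) T)" for S
  have lub: "quot_lub I K (X ` S) (\<sigma> S)" if "S \<subseteq> L" for S
  proof -
    have "X ` S \<subseteq> Pow K"
      using X that unfolding ideal_antichain_def by blast
    then show ?thesis
      using complete unfolding quotient_complete_iff_quot_lub \<sigma>_def by (meson someI)
  qed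
  have "inj_on \<sigma> (Pow L)"
    by (rule ideal_antichain_quot_lub_inj[OF I X lub])
  moreover have "\<sigma> ` Pow L \<subseteq> Pow K"
    using lub unfolding quot_lub_def by blast
  ultimately show ?thesis
    using card_of_ordLeq by blast
qed

theorem lemma1p1:
  fixes I :: "'a set set" and K :: "'a set"
  assumes "\<not> countable K"
    and "ideal_over I K"
    and "quotient_complete I K"
  shows "(\<forall>L :: 'b set. \<not> saturated I K L \<longrightarrow> (card_of (Pow L), card_of (Pow K)) \<in> ordLeq)
         \<and> saturated I K (Pow K)
         \<and> ( (card_of (Pow K), card_of (Pow (Field (cardSuc (card_of K))))) \<in> ordLess \<longrightarrow> saturated I K (Field (cardSuc (card_of K))))"
proof -
  have "infinite K"
    using \<open>\<not> countable K\<close> countable_finite by blast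
  then have bound: "(card_of (Pow L), card_of (Pow K)) \<in> ordLeq" if "\<not> saturated I K L"
    for L :: "'c set"
    using not_saturated_card_of_Pow_ordLeq assms(2,3) that by blast
  have "saturated I K (Pow K)"
    using bound[of "Pow K"] card_of_Pow[of "Pow K"] not_ordLess_ordLeq by blast
  moreover have "saturated I K (Field (cardSuc (card_of K)))"
    if "(card_of (Pow K), card_of (Pow (Field (cardSuc (card_of K))))) \<in> ordLess"
    using bound that not_ordLess_ordLeq by blast
  ultimately show ?thesis
    using bound by blast
qed

end
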